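(* With an even number of agents $n=2p$, the modified RC mechanism subgame perfect implements the majority correspondence $Maj$ in the following sense: for every preference profile $R$ with $|Maj(R)|=1$, every subgame-perfect equilibrium yields $Maj(R)$ and some subgame-perfect equilibrium yields $Maj(R)$; and for every $R$ with $Maj(R)=\{a,b\}$, a subgame-perfect equilibrium exists, any lottery over $A$ being an admissible equilibrium outcome.
   Context: Agents $I=\{1,\dots,n\}$, $n=2p$, options $A=\{a,b\}$, strict preferences, complete information; lotteries compared by stochastic dominance (an agent preferring $x$ weakly (strictly) prefers $\beta$ to $\eta$ iff $\beta(x)\ge\eta(x)$ ($>$)). Majority correspondence: $Maj(R)=a$ if at least $p+1$ agents prefer $a$, $Maj(R)=b$ if at least $p+1$ agents prefer $b$, and $Maj(R)=\{a,b\}$ otherwise. Modified RC mechanism: Voting stage: each agent simultaneously votes $v_i\in A$; the profile $v$ is publicly announced. If $a$ and $b$ receive equally many votes, the outcome is the lottery giving probability $1/2$ to each option. Otherwise the option with more votes is the Voting-stage winner, and in the Confirmation stage $p+1$ agents are drawn uniformly at random and ordered uniformly, $\pi_1,\dots,\pi_{p+1}$; sequentially, as long as nobody has announced $Y$, agent $\pi_t$ announces $Y$ or $N$. If some agent announces $Y$ the outcome is the Voting-stage winner; if all announce $N$ the outcome is the lottery $\beta(v)$ with $\beta_a(v)=|\{i:v_i=a\}|/n$, $\beta_b(v)=1-\beta_a(v)$. *)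

theory Defs
  imports Complex_Main
begin

text \<open>Two options; an agent's strict preference over {a,b} is given by its top option.\<close>
datatype opt = OptA | OptB

text \<open>Agents are 1..n with n = 2p. A preference profile R maps each agent to its
  preferred option. A lottery is a function opt => real (probabilities).\<close>
type_synonym profile = "nat \<Rightarrow> opt"
type_synonym lottery = "opt \<Rightarrow> real"

definition agents :: "nat \<Rightarrow> nat set" where
  "agents p = {1..2*p}"

definition is_lottery :: "lottery \<Rightarrow> bool" where
  "is_lottery L \<longleftrightarrow> (\<forall>x. L x \<ge> 0) \<and> L OptA + L OptB = 1"

definition dlot :: "opt \<Rightarrow> lottery" where
  "dlot x = (\<lambda>y. if y = x then 1 else 0)"

definition half_lot :: lottery where
  "half_lot = (\<lambda>_. 1/2)"

text \<open>Stochastic dominance comparison: agent i (top option R i) strictly prefers L to M.\<close>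
definition strict_pref :: "profile \<Rightarrow> nat \<Rightarrow> lottery \<Rightarrow> lottery \<Rightarrow> bool" where
  "strict_pref R i L M \<longleftrightarrow> L (R i) > M (R i)"

definition count_pref :: "nat \<Rightarrow> (nat \<Rightarrow> opt) \<Rightarrow> opt \<Rightarrow> nat" where
  "count_pref p f x = card {i \<in> agents p. f i = x}"

definition Maj :: "nat \<Rightarrow> profile \<Rightarrow> opt set" where
  "Maj p R = (if count_pref p R OptA \<ge> p + 1 then {OptA}
              else if count_pref p R OptB \<ge> p + 1 then {OptB}
              else {OptA, OptB})"

definition tie :: "nat \<Rightarrow> (nat \<Rightarrow> opt) \<Rightarrow> bool" where
  "tie p v \<longleftrightarrow> count_pref p v OptA = count_pref p v OptB"

definition vwinner :: "nat \<Rightarrow> (nat \<Rightarrow> opt) \<Rightarrow> opt" where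
  "vwinner p v = (if count_pref p v OptA > count_pref p v OptB then OptA else OptB)"

definition beta :: "nat \<Rightarrow> (nat \<Rightarrow> opt) \<Rightarrow> lottery" where
  "beta p v = (\<lambda>x. real (count_pref p v x) / real (2*p))"

text \<open>Confirmation stage: orderings of p+1 distinct agents (drawn uniformly).\<close>
definition Ords :: "nat \<Rightarrow> nat list set" where
  "Ords p = {\<pi>. distinct \<pi> \<and> set \<pi> \<subseteq> agents p \<and> length \<pi> = p + 1}"

text \<open>Confirmation strategies: conf i v \<pi> t = True means that agent i, when it is its
  turn at position t (0-based) of the drawn ordering \<pi> after the (public) vote profile v
  and all earlier drawn agents announced N, announces Y.\<close>
type_synonym cstrat = "nat \<Rightarrow> (nat \<Rightarrow> opt) \<Rightarrow> nat list \<Rightarrow> nat \<Rightarrow> bool"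

text \<open>Outcome of the subgame starting at the decision node (v, \<pi>, t).\<close>
definition conf_outcome :: "nat \<Rightarrow> cstrat \<Rightarrow> (nat \<Rightarrow> opt) \<Rightarrow> nat list \<Rightarrow> nat \<Rightarrow> lottery" where
  "conf_outcome p conf v \<pi> t =
     (if \<exists>s. t \<le> s \<and> s < length \<pi> \<and> conf (\<pi> ! s) v \<pi> s then dlot (vwinner p v) else beta p v)"

text \<open>Outcome of the subgame starting at the chance node after the (non-tied) vote v.\<close>
definition chance_outcome :: "nat \<Rightarrow> cstrat \<Rightarrow> (nat \<Rightarrow> opt) \<Rightarrow> lottery" where
  "chance_outcome p conf v =
     (\<lambda>x. (\<Sum>\<pi>\<in>Ords p. conf_outcome p conf v \<pi> 0 x) / real (card (Ords p)))"

definition outcome :: "nat \<Rightarrow> (nat \<Rightarrow> opt) \<Rightarrow> cstrat \<Rightarrow> lottery" where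
  "outcome p vote conf = (if tie p vote then half_lot else chance_outcome p conf vote)"

text \<open>Subgame-perfect equilibrium (pure strategies): no agent has a profitable
  unilateral deviation in any subgame (the whole game, every chance node after a
  non-tied vote, every decision node of the confirmation stage).\<close>
definition SPE :: "nat \<Rightarrow> profile \<Rightarrow> (nat \<Rightarrow> opt) \<Rightarrow> cstrat \<Rightarrow> bool" where
  "SPE p R vote conf \<longleftrightarrow>
     (\<forall>i\<in>agents p. \<forall>x c.
        \<not> strict_pref R i (outcome p (vote(i := x)) (conf(i := c))) (outcome p vote conf)) \<and>
     (\<forall>v. \<not> tie p v \<longrightarrow> (\<forall>i\<in>agents p. \<forall>c.
        \<not> strict_pref R i (chance_outcome p (conf(i := c)) v) (chance_outcome p conf v))) \<and>
     (\<forall>v \<pi> t. \<not> tie p v \<longrightarrow> \<pi> \<in> Ords p \<longrightarrow> t < length \<pi> \<longrightarrow> (\<forall>i\<in>agents p. \<forall>c.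
        \<not> strict_pref R i (conf_outcome p (conf(i := c)) v \<pi> t) (conf_outcome p conf v \<pi> t)))"

end

theory Submission
  imports Defs
begin

(*
  Subgame perfection pins down the confirmation stage: the voting winner is confirmed as soon as
  one drawn agent prefers it, and if none does, nobody confirms, since the last confirmer would
  rather obtain beta(v), which gives his favourite positive weight. As any p+1 agents contain a
  supporter of every option backed by at least p agents, truthful voting followed by "confirm iff
  you prefer the winner" is an equilibrium for every profile; its outcome is the majority option,
  or the fair lottery under a tie. Conversely, let w have a strict majority. If the vote is tied,
  a w-supporter voting otherwise makes w win outright by switching to w. If the other option wins,
  a w-supporter who voted for it switches to w. Either this creates a tie, worth 1/2 > beta(v)(w)
  to him, or it raises w's share in beta while a draw containing a supporter of the winner still
  confirms it, so w's probability rises, strictly because some draw consists of w-supporters only.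
*)

fun other :: "opt \<Rightarrow> opt" where
  "other OptA = OptB"
| "other OptB = OptA"

lemma other_other [simp]: "other (other x) = x"
  by (cases x) auto

lemma other_neq [simp]: "other x \<noteq> x" "x \<noteq> other x"
  by (cases x; simp)+

lemma neq_imp_eq_other: "y \<noteq> x \<Longrightarrow> y = other x"
  by (cases x; cases y) auto

lemma finite_agents [simp]: "finite (agents p)"
  by (simp add: agents_def)

lemma mem_agents_imp_pos: "i \<in> agents p \<Longrightarrow> p \<ge> 1"
  by (simp add: agents_def)

lemma count_pref_other: "count_pref p f x + count_pref p f (other x) = 2 * p"
proof -
  let ?A = "{i \<in> agents p. f i = x}" and ?B = "{i \<in> agents p. f i = other x}"
  have "agents p = ?A \<union> ?B"
    using neq_imp_eq_other by auto
  then have "card (agents p) = card (?A \<union> ?B)"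
    by simp
  also have "\<dots> = card ?A + card ?B"
    by (rule card_Un_disjoint) auto
  finally show ?thesis
    by (simp add: count_pref_def agents_def)
qed

lemma count_pref_le: "count_pref p f x \<le> 2 * p"
  using count_pref_other[of p f x] by linarith

lemma tie_iff_count_pref_eq: "tie p v \<longleftrightarrow> count_pref p v x = p"
  using count_pref_other[of p v x] count_pref_other[of p v OptA]
  by (cases x) (auto simp: tie_def)

lemma vwinner_eq_iff: "\<not> tie p v \<Longrightarrow> vwinner p v = x \<longleftrightarrow> p < count_pref p v x"
  using count_pref_other[of p v OptA]
  by (cases x) (auto simp: tie_def vwinner_def)

lemma count_pref_fun_upd:
  assumes "i \<in> agents p" and "f i \<noteq> x"
  shows "count_pref p (f(i := x)) x = count_pref p f x + 1"
proof -
  have "{j \<in> agents p. (f(i := x)) j = x} = insert i {j \<in> agents p. f j = x}"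
    using assms(1) by auto
  then show ?thesis
    using assms(2) by (simp add: count_pref_def)
qed

lemma count_pref_lessE:
  assumes "count_pref p g x < count_pref p f x"
  obtains i where "i \<in> agents p" "f i = x" "g i \<noteq> x"
proof -
  have "\<not> {i \<in> agents p. f i = x} \<subseteq> {i \<in> agents p. g i = x}"
  proof
    assume "{i \<in> agents p. f i = x} \<subseteq> {i \<in> agents p. g i = x}"
    then have "count_pref p f x \<le> count_pref p g x"
      unfolding count_pref_def by (intro card_mono) auto
    with assms show False
      by simp
  qed
  then show ?thesis
    using that by blast
qed

lemma beta_nonneg: "0 \<le> beta p v x"
  by (simp add: beta_def)

lemma beta_le_1: "beta p v x \<le> 1"
  using count_pref_le[of p v x] by (cases "p = 0") (auto simp: beta_def)

lemma beta_eq_1_imp_eq_dlot: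
  assumes "p \<ge> 1" and "beta p v w = 1"
  shows "beta p v = dlot w"
proof -
  have "count_pref p v w = 2 * p"
    using assms by (simp add: beta_def)
  then have "count_pref p v (other w) = 0"
    using count_pref_other[of p v w] by simp
  show ?thesis
  proof
    fix y
    show "beta p v y = dlot w y"
      using assms(2) \<open>count_pref p v (other w) = 0\<close> neq_imp_eq_other[of y w]
      by (cases "y = w") (auto simp: beta_def dlot_def)
  qed
qed

lemma conf_outcome_cases:
  "conf_outcome p conf v \<pi> t = dlot (vwinner p v) \<or> conf_outcome p conf v \<pi> t = beta p v"
  by (simp add: conf_outcome_def)

lemma conf_outcome_nonneg: "0 \<le> conf_outcome p conf v \<pi> t x"
  using conf_outcome_cases[of p conf v \<pi> t] beta_nonneg by (auto simp: dlot_def)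

lemma conf_outcome_le_1: "conf_outcome p conf v \<pi> t x \<le> 1"
  using conf_outcome_cases[of p conf v \<pi> t] beta_le_1 by (auto simp: dlot_def)

lemma conf_outcome_loser_le_beta:
  "x \<noteq> vwinner p v \<Longrightarrow> conf_outcome p conf v \<pi> t x \<le> beta p v x"
  using conf_outcome_cases[of p conf v \<pi> t] beta_nonneg by (auto simp: dlot_def)

lemma finite_Ords [simp]: "finite (Ords p)"
proof -
  have "Ords p \<subseteq> {xs. set xs \<subseteq> agents p \<and> length xs = p + 1}"
    by (auto simp: Ords_def)
  then show ?thesis
    using finite_lists_length_eq[OF finite_agents] by (rule finite_subset)
qed

lemma Ords_subset_agents: "\<pi> \<in> Ords p \<Longrightarrow> j \<in> set \<pi> \<Longrightarrow> j \<in> agents p"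
  by (auto simp: Ords_def)

lemma Ords_meets_supporters:
  assumes "count_pref p R w \<ge> p" and "\<pi> \<in> Ords p"
  obtains j where "j \<in> set \<pi>" "R j = w"
proof (rule ccontr)
  assume "\<not> thesis"
  with that have "set \<pi> \<subseteq> {i \<in> agents p. R i = other w}"
    using assms(2) neq_imp_eq_other by (fastforce simp: Ords_def)
  then have "card (set \<pi>) \<le> count_pref p R (other w)"
    unfolding count_pref_def by (intro card_mono) auto
  moreover have "card (set \<pi>) = p + 1"
    using assms(2) by (simp add: Ords_def distinct_card)
  ultimately show False
    using count_pref_other[of p R w] assms(1) by linarith
qed

lemma Ords_within_supporters:
  assumes "count_pref p R w \<ge> p + 1"
  obtains \<pi> where "\<pi> \<in> Ords p" "\<forall>j\<in>set \<pi>. R j = w"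
proof -
  obtain T where T: "T \<subseteq> {i \<in> agents p. R i = w}" "card T = p + 1" "finite T"
    using obtain_subset_with_card_n[OF assms[unfolded count_pref_def]] by blast
  then have "sorted_list_of_set T \<in> Ords p" "\<forall>j\<in>set (sorted_list_of_set T). R j = w"
    by (auto simp: Ords_def)
  then show ?thesis
    using that by blast
qed

lemma chance_outcome_mono:
  assumes "\<forall>\<pi>\<in>Ords p. conf_outcome p conf v \<pi> 0 x \<le> conf_outcome p conf' v' \<pi> 0 y"
  shows "chance_outcome p conf v x \<le> chance_outcome p conf' v' y"
  unfolding chance_outcome_def
  by (intro divide_right_mono sum_mono) (use assms in auto)

lemma chance_outcome_strict_mono:
  assumes "\<forall>\<pi>\<in>Ords p. conf_outcome p conf v \<pi> 0 x \<le> conf_outcome p conf' v' \<pi> 0 y"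
    and "\<pi>\<^sub>0 \<in> Ords p" "conf_outcome p conf v \<pi>\<^sub>0 0 x < conf_outcome p conf' v' \<pi>\<^sub>0 0 y"
  shows "chance_outcome p conf v x < chance_outcome p conf' v' y"
proof -
  have "card (Ords p) > 0"
    using assms(2) card_gt_0_iff[of "Ords p"] by auto
  moreover have "(\<Sum>\<pi>\<in>Ords p. conf_outcome p conf v \<pi> 0 x) < (\<Sum>\<pi>\<in>Ords p. conf_outcome p conf' v' \<pi> 0 y)"
    using assms(2,3) by (intro sum_strict_mono_ex1[OF finite_Ords assms(1)]) blast
  ultimately show ?thesis
    unfolding chance_outcome_def by (simp add: divide_strict_right_mono)
qed

lemma chance_outcome_le_const:
  assumes "\<forall>\<pi>\<in>Ords p. conf_outcome p conf v \<pi> 0 x \<le> b" and "0 \<le> b"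
  shows "chance_outcome p conf v x \<le> b"
proof (cases "Ords p = {}")
  case False
  have "(\<Sum>\<pi>\<in>Ords p. conf_outcome p conf v \<pi> 0 x) \<le> card (Ords p) * b"
    using sum_mono[of "Ords p" _ "\<lambda>_. b"] assms(1) by simp
  then show ?thesis
    using False by (simp add: chance_outcome_def divide_le_eq mult.commute)
qed (simp add: chance_outcome_def assms(2))

lemma chance_outcome_const:
  assumes "\<forall>\<pi>\<in>Ords p. conf_outcome p conf v \<pi> 0 = L" and "Ords p \<noteq> {}"
  shows "chance_outcome p conf v = L"
proof
  fix x
  show "chance_outcome p conf v x = L x"
    using assms by (simp add: chance_outcome_def)
qed

lemma chance_outcome_nonneg: "0 \<le> chance_outcome p conf v x"
  by (simp add: chance_outcome_def sum_nonneg conf_outcome_nonneg)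

lemma outcome_nonneg: "0 \<le> outcome p vote conf x"
  by (simp add: outcome_def half_lot_def chance_outcome_nonneg)

lemma outcome_le_1: "outcome p vote conf x \<le> 1"
  using chance_outcome_le_const[of p conf vote x 1] conf_outcome_le_1
  by (simp add: outcome_def half_lot_def)

lemma not_tie_imp_pos: "\<not> tie p v \<Longrightarrow> p \<ge> 1"
  using tie_iff_count_pref_eq[of p v OptA] count_pref_le[of p v OptA] by auto

lemma Ords_nonempty: "p \<ge> 1 \<Longrightarrow> Ords p \<noteq> {}"
proof -
  assume "p \<ge> 1"
  then have "[1..<p + 2] \<in> Ords p"
    by (auto simp: Ords_def agents_def)
  then show ?thesis
    by blast
qed

definition voting_stage_eq :: "nat \<Rightarrow> profile \<Rightarrow> (nat \<Rightarrow> opt) \<Rightarrow> cstrat \<Rightarrow> bool" where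
  "voting_stage_eq p R vote conf \<longleftrightarrow> (\<forall>i\<in>agents p. \<forall>x c.
     \<not> strict_pref R i (outcome p (vote(i := x)) (conf(i := c))) (outcome p vote conf))"

definition chance_stage_eq :: "nat \<Rightarrow> profile \<Rightarrow> cstrat \<Rightarrow> bool" where
  "chance_stage_eq p R conf \<longleftrightarrow> (\<forall>v. \<not> tie p v \<longrightarrow> (\<forall>i\<in>agents p. \<forall>c.
     \<not> strict_pref R i (chance_outcome p (conf(i := c)) v) (chance_outcome p conf v)))"

definition confirmation_stage_eq :: "nat \<Rightarrow> profile \<Rightarrow> cstrat \<Rightarrow> bool" where
  "confirmation_stage_eq p R conf \<longleftrightarrow>
     (\<forall>v \<pi> t. \<not> tie p v \<longrightarrow> \<pi> \<in> Ords p \<longrightarrow> t < length \<pi> \<longrightarrow> (\<forall>i\<in>agents p. \<forall>c.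
        \<not> strict_pref R i (conf_outcome p (conf(i := c)) v \<pi> t) (conf_outcome p conf v \<pi> t)))"

lemma SPE_iff_stages:
  "SPE p R vote conf \<longleftrightarrow>
     voting_stage_eq p R vote conf \<and> chance_stage_eq p R conf \<and> confirmation_stage_eq p R conf"
  by (simp add: SPE_def voting_stage_eq_def chance_stage_eq_def confirmation_stage_eq_def)

lemma voting_stage_eqD:
  assumes "voting_stage_eq p R vote conf" and "i \<in> agents p"
  shows "outcome p (vote(i := x)) conf (R i) \<le> outcome p vote conf (R i)"
  using assms fun_upd_triv[of conf i]
  unfolding voting_stage_eq_def strict_pref_def by (metis not_less)

lemma confirmation_stage_eq_supporter_confirms:
  assumes eq: "confirmation_stage_eq p R conf" and "\<not> tie p v" and \<pi>: "\<pi> \<in> Ords p"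
    and "j \<in> set \<pi>" and Rj: "R j = vwinner p v"
  shows "conf_outcome p conf v \<pi> 0 = dlot (vwinner p v)"
proof (rule ccontr)
  let ?w = "vwinner p v"
  assume ne: "conf_outcome p conf v \<pi> 0 \<noteq> dlot ?w"
  then have no_Y: "\<not> (\<exists>s<length \<pi>. conf (\<pi> ! s) v \<pi> s)"
    by (auto simp: conf_outcome_def split: if_splits)
  then have "conf_outcome p conf v \<pi> 0 = beta p v"
    unfolding conf_outcome_def by (intro if_not_P) auto
  with ne have "beta p v \<noteq> dlot ?w"
    by simp
  moreover have j: "j \<in> agents p"
    using Ords_subset_agents[OF \<pi> \<open>j \<in> set \<pi>\<close>] .
  ultimately have "beta p v ?w < 1"
    using beta_eq_1_imp_eq_dlot[OF mem_agents_imp_pos[OF j]] beta_le_1[of p v ?w] by fastforce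
  obtain s where s: "s < length \<pi>" "\<pi> ! s = j"
    using \<open>j \<in> set \<pi>\<close> by (auto simp: in_set_conv_nth)
  let ?yes = "\<lambda>_ _ _. True"
  have "conf_outcome p (conf(j := ?yes)) v \<pi> s = dlot ?w"
    using s by (auto simp: conf_outcome_def)
  moreover have "conf_outcome p conf v \<pi> s = beta p v"
    using no_Y by (auto simp: conf_outcome_def)
  ultimately have "strict_pref R j (conf_outcome p (conf(j := ?yes)) v \<pi> s) (conf_outcome p conf v \<pi> s)"
    using \<open>beta p v ?w < 1\<close> Rj by (simp add: strict_pref_def dlot_def)
  then show False
    using eq \<open>\<not> tie p v\<close> \<pi> s j unfolding confirmation_stage_eq_def by blast
qed

lemma confirmation_stage_eq_no_supporter:
  assumes eq: "confirmation_stage_eq p R conf" and "\<not> tie p v" and \<pi>: "\<pi> \<in> Ords p"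
    and no_supporter: "\<forall>j\<in>set \<pi>. R j \<noteq> vwinner p v"
    and pos: "0 < beta p v (other (vwinner p v))"
  shows "conf_outcome p conf v \<pi> 0 = beta p v"
proof (rule ccontr)
  let ?w = "vwinner p v"
  let ?S = "{s. s < length \<pi> \<and> conf (\<pi> ! s) v \<pi> s}"
  assume "conf_outcome p conf v \<pi> 0 \<noteq> beta p v"
  then have "?S \<noteq> {}"
    by (auto simp: conf_outcome_def split: if_splits)
  define m where "m = Max ?S"
  have m: "m \<in> ?S" and m_max: "\<And>s. s \<in> ?S \<Longrightarrow> s \<le> m"
    using Max_in[of ?S] Max_ge[of ?S] \<open>?S \<noteq> {}\<close> by (auto simp: m_def)
  define j where "j = \<pi> ! m"
  have "j \<in> set \<pi>"
    using m by (simp add: j_def)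
  then have j: "j \<in> agents p" and Rj: "R j = other ?w"
    using Ords_subset_agents[OF \<pi>] no_supporter neq_imp_eq_other by auto
  text \<open>The last confirmer j prefers the loser, so declining moves the outcome to beta.\<close>
  let ?no = "\<lambda>_ _ _. False"
  have "\<not> (\<exists>s. m \<le> s \<and> s < length \<pi> \<and> (conf(j := ?no)) (\<pi> ! s) v \<pi> s)"
  proof
    assume "\<exists>s. m \<le> s \<and> s < length \<pi> \<and> (conf(j := ?no)) (\<pi> ! s) v \<pi> s"
    then obtain s where s: "m \<le> s" "s < length \<pi>" "(conf(j := ?no)) (\<pi> ! s) v \<pi> s"
      by blast
    moreover have "distinct \<pi>"
      using \<pi> by (simp add: Ords_def)
    ultimately have "s \<noteq> m" "\<pi> ! s \<noteq> j"
      using m by (auto simp: j_def nth_eq_iff_index_eq split: if_splits)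
    then show False
      using s m_max[of s] by auto
  qed
  then have "conf_outcome p (conf(j := ?no)) v \<pi> m = beta p v"
    unfolding conf_outcome_def by (rule if_not_P)
  moreover have "conf_outcome p conf v \<pi> m = dlot ?w"
    using m by (auto simp: conf_outcome_def)
  ultimately have "strict_pref R j (conf_outcome p (conf(j := ?no)) v \<pi> m) (conf_outcome p conf v \<pi> m)"
    using pos Rj by (simp add: strict_pref_def dlot_def)
  then show False
    using eq \<open>\<not> tie p v\<close> \<pi> m j unfolding confirmation_stage_eq_def by blast
qed

lemma chance_outcome_supported_winner:
  assumes "confirmation_stage_eq p R conf" and "\<not> tie p v" and "count_pref p R (vwinner p v) \<ge> p"
  shows "chance_outcome p conf v = dlot (vwinner p v)"
proof (rule chance_outcome_const)
  show "\<forall>\<pi>\<in>Ords p. conf_outcome p conf v \<pi> 0 = dlot (vwinner p v)"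
    using Ords_meets_supporters[OF assms(3)] confirmation_stage_eq_supporter_confirms[OF assms(1,2)]
    by metis
  show "Ords p \<noteq> {}"
    using Ords_nonempty not_tie_imp_pos assms(2) by blast
qed

definition truthful_conf :: "nat \<Rightarrow> profile \<Rightarrow> cstrat" where
  "truthful_conf p R = (\<lambda>i v \<pi> s. R i = vwinner p v)"

lemma conf_outcome_truthful_deviation:
  "conf_outcome p ((truthful_conf p R)(i := c)) v \<pi> t (R i) \<le> conf_outcome p (truthful_conf p R) v \<pi> t (R i)"
proof -
  let ?w = "vwinner p v" and ?T = "truthful_conf p R"
  let ?E = "\<exists>s. t \<le> s \<and> s < length \<pi> \<and> R (\<pi> ! s) = ?w"
  have T: "conf_outcome p ?T v \<pi> t = (if ?E then dlot ?w else beta p v)"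
    by (simp add: conf_outcome_def truthful_conf_def)
  consider "?E" "R i = ?w" | "?E" "R i \<noteq> ?w" | "\<not> ?E" "R i = ?w" | "\<not> ?E" "R i \<noteq> ?w"
    by blast
  then show ?thesis
  proof cases
    case 1
    then show ?thesis
      using T conf_outcome_le_1 by (simp add: dlot_def)
  next
    case 2
    then have "conf_outcome p (?T(i := c)) v \<pi> t = dlot ?w"
      unfolding conf_outcome_def by (intro if_P) (auto simp: truthful_conf_def)
    then show ?thesis
      using T 2 by simp
  next
    case 3
    then have "conf_outcome p (?T(i := c)) v \<pi> t = conf_outcome p ?T v \<pi> t"
      by (auto simp: conf_outcome_def truthful_conf_def)
    then show ?thesis
      by simp
  next
    case 4
    then show ?thesis
      using T[unfolded if_not_P[OF 4(1)]] conf_outcome_loser_le_beta[of "R i" p v] by simp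
  qed
qed

lemma chance_outcome_truthful_deviation:
  "chance_outcome p ((truthful_conf p R)(i := c)) v (R i) \<le> chance_outcome p (truthful_conf p R) v (R i)"
  by (rule chance_outcome_mono) (simp add: conf_outcome_truthful_deviation)

lemma confirmation_stage_eq_truthful: "confirmation_stage_eq p R (truthful_conf p R)"
  using conf_outcome_truthful_deviation
  by (simp add: confirmation_stage_eq_def strict_pref_def not_less)

lemma chance_stage_eq_truthful: "chance_stage_eq p R (truthful_conf p R)"
  using chance_outcome_truthful_deviation
  by (simp add: chance_stage_eq_def strict_pref_def not_less)

lemma voting_stage_eq_truthful: "voting_stage_eq p R R (truthful_conf p R)"
  unfolding voting_stage_eq_def strict_pref_def not_less
proof (intro ballI allI)
  fix i x c
  assume i: "i \<in> agents p"
  let ?T = "truthful_conf p R"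
  show "outcome p (R(i := x)) (?T(i := c)) (R i) \<le> outcome p R ?T (R i)"
  proof (cases "x = R i")
    case True
    then show ?thesis
      by (simp add: outcome_def chance_outcome_truthful_deviation)
  next
    case False
    show ?thesis
    proof (cases "count_pref p R x \<ge> p")
      case True
      let ?v = "R(i := x)"
      have "count_pref p ?v x = count_pref p R x + 1"
        using count_pref_fun_upd[OF i] False by simp
      then have "\<not> tie p ?v" and "vwinner p ?v = x"
        using True tie_iff_count_pref_eq[of p ?v x] vwinner_eq_iff[of p ?v x] by auto
      then have "outcome p ?v (?T(i := c)) (R i) \<le> chance_outcome p ?T ?v (R i)"
        by (simp add: outcome_def chance_outcome_truthful_deviation)
      also have "\<dots> = dlot x (R i)"
        using chance_outcome_supported_winner[OF confirmation_stage_eq_truthful]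
          \<open>\<not> tie p ?v\<close> \<open>vwinner p ?v = x\<close> True by simp
      also have "\<dots> \<le> outcome p R ?T (R i)"
        using False outcome_nonneg by (simp add: dlot_def)
      finally show ?thesis .
    next
      case False
      then have "count_pref p R (R i) > p"
        using count_pref_other[of p R x] neq_imp_eq_other[OF \<open>x \<noteq> R i\<close>] by auto
      then have "\<not> tie p R" and "vwinner p R = R i"
        using tie_iff_count_pref_eq[of p R "R i"] vwinner_eq_iff[of p R "R i"] by auto
      then have "outcome p R ?T = dlot (R i)"
        using chance_outcome_supported_winner[OF confirmation_stage_eq_truthful]
          \<open>count_pref p R (R i) > p\<close> by (simp add: outcome_def)
      then show ?thesis
        using outcome_le_1 by (simp add: dlot_def)
    qed
  qed
qed

lemma SPE_truthful: "SPE p R R (truthful_conf p R)"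
  by (simp add: SPE_iff_stages voting_stage_eq_truthful chance_stage_eq_truthful
      confirmation_stage_eq_truthful)

lemma outcome_truthful_majority:
  assumes "count_pref p R w \<ge> p + 1"
  shows "outcome p R (truthful_conf p R) = dlot w"
proof -
  have "\<not> tie p R" and "vwinner p R = w"
    using assms tie_iff_count_pref_eq[of p R w] vwinner_eq_iff[of p R w] by auto
  then show ?thesis
    using chance_outcome_supported_winner[OF confirmation_stage_eq_truthful] assms
    by (simp add: outcome_def)
qed

lemma voting_stage_eq_not_tie:
  assumes conf_eq: "confirmation_stage_eq p R conf" and vote_eq: "voting_stage_eq p R vote conf"
    and maj: "count_pref p R w \<ge> p + 1"
  shows "\<not> tie p vote"
proof
  assume "tie p vote"
  then have "count_pref p vote w = p"
    by (simp add: tie_iff_count_pref_eq[of _ _ w])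
  then obtain i where i: "i \<in> agents p" "R i = w" "vote i \<noteq> w"
    using maj count_pref_lessE[of p vote w R] by auto
  let ?v = "vote(i := w)"
  have "count_pref p ?v w = p + 1"
    using count_pref_fun_upd[of i p vote w] i \<open>count_pref p vote w = p\<close> by simp
  then have "\<not> tie p ?v" and "vwinner p ?v = w"
    using tie_iff_count_pref_eq[of p ?v w] vwinner_eq_iff[of p ?v w] by auto
  then have "outcome p ?v conf = dlot w"
    using chance_outcome_supported_winner[OF conf_eq] maj by (simp add: outcome_def)
  moreover have "outcome p vote conf = half_lot"
    using \<open>tie p vote\<close> by (simp add: outcome_def)
  ultimately show False
    using voting_stage_eqD[OF vote_eq i(1), of w] i(2) by (simp add: dlot_def half_lot_def)
qed

lemma chance_outcome_loser_strict_mono: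
  assumes conf_eq: "confirmation_stage_eq p R conf" and nt: "\<not> tie p v" and nt': "\<not> tie p v'"
    and u: "vwinner p v = u" and u': "vwinner p v' = u"
    and less: "beta p v (other u) < beta p v' (other u)" and maj: "count_pref p R (other u) \<ge> p + 1"
  shows "chance_outcome p conf v (other u) < chance_outcome p conf v' (other u)"
proof -
  have v'_beta: "conf_outcome p conf v' \<pi> 0 = beta p v'"
    if "\<pi> \<in> Ords p" "\<forall>j\<in>set \<pi>. R j = other u" for \<pi>
    using confirmation_stage_eq_no_supporter[OF conf_eq nt' that(1)] that(2) u' less
      beta_nonneg[of p v "other u"] by auto
  have v_le: "conf_outcome p conf v \<pi> 0 (other u) \<le> beta p v (other u)" for \<pi>
    using conf_outcome_loser_le_beta u by simp
  have "\<forall>\<pi>\<in>Ords p. conf_outcome p conf v \<pi> 0 (other u) \<le> conf_outcome p conf v' \<pi> 0 (other u)"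
  proof
    fix \<pi>
    assume \<pi>: "\<pi> \<in> Ords p"
    show "conf_outcome p conf v \<pi> 0 (other u) \<le> conf_outcome p conf v' \<pi> 0 (other u)"
    proof (cases "\<exists>j\<in>set \<pi>. R j = u")
      case True
      then obtain j where "j \<in> set \<pi>" "R j = u"
        by blast
      then have "conf_outcome p conf v \<pi> 0 = dlot u"
        using confirmation_stage_eq_supporter_confirms[OF conf_eq nt \<pi>, of j] u by simp
      then show ?thesis
        using conf_outcome_nonneg by (simp add: dlot_def)
    next
      case False
      then have "\<forall>j\<in>set \<pi>. R j = other u"
        using neq_imp_eq_other by blast
      then show ?thesis
        using v'_beta[OF \<pi>] v_le[of \<pi>] less by simp
    qed
  qed
  moreover obtain \<pi>\<^sub>0 where \<pi>\<^sub>0: "\<pi>\<^sub>0 \<in> Ords p" "\<forall>j\<in>set \<pi>\<^sub>0. R j = other u"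
    using Ords_within_supporters[OF maj] by blast
  moreover have "conf_outcome p conf v \<pi>\<^sub>0 0 (other u) < conf_outcome p conf v' \<pi>\<^sub>0 0 (other u)"
    using v'_beta[OF \<pi>\<^sub>0] v_le[of \<pi>\<^sub>0] less by simp
  ultimately show ?thesis
    using chance_outcome_strict_mono by blast
qed

lemma outcome_switch_to_loser_strict_mono:
  assumes conf_eq: "confirmation_stage_eq p R conf" and nt: "\<not> tie p v"
    and u: "vwinner p v = other w" and maj: "count_pref p R w \<ge> p + 1"
    and i: "i \<in> agents p" "v i = other w"
  shows "outcome p v conf w < outcome p (v(i := w)) conf w"
proof -
  let ?v = "v(i := w)"
  have p: "p \<ge> 1"
    using mem_agents_imp_pos[OF i(1)] .
  have cnt: "count_pref p ?v w = count_pref p v w + 1"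
    using count_pref_fun_upd[OF i(1)] i(2) by simp
  have "count_pref p v w < p"
    using vwinner_eq_iff[OF nt, of "other w"] u count_pref_other[of p v w] by simp
  have "chance_outcome p conf v w \<le> beta p v w"
    by (rule chance_outcome_le_const) (use conf_outcome_loser_le_beta u beta_nonneg in auto)
  then have out_le: "outcome p v conf w \<le> beta p v w"
    using nt by (simp add: outcome_def)
  show ?thesis
  proof (cases "tie p ?v")
    case True
    then have "count_pref p v w + 1 = p"
      using cnt tie_iff_count_pref_eq[of p ?v w] by simp
    then have "beta p v w < 1 / 2"
      using p by (simp add: beta_def field_simps)
    then show ?thesis
      using True out_le by (simp add: outcome_def half_lot_def)
  next
    case False
    have "vwinner p ?v \<noteq> w"
      using vwinner_eq_iff[OF False, of w] cnt \<open>count_pref p v w < p\<close> by simp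
    then have "vwinner p ?v = other w"
      using neq_imp_eq_other by blast
    moreover have "beta p v w < beta p ?v w"
      using cnt p by (simp add: beta_def divide_strict_right_mono)
    ultimately have "chance_outcome p conf v w < chance_outcome p conf ?v w"
      using chance_outcome_loser_strict_mono[OF conf_eq nt False u] maj by simp
    then show ?thesis
      using nt False by (simp add: outcome_def)
  qed
qed

lemma voting_stage_eq_vwinner:
  assumes conf_eq: "confirmation_stage_eq p R conf" and vote_eq: "voting_stage_eq p R vote conf"
    and maj: "count_pref p R w \<ge> p + 1" and nt: "\<not> tie p vote"
  shows "vwinner p vote = w"
proof (rule ccontr)
  let ?u = "other w"
  assume "vwinner p vote \<noteq> w"
  then have u: "vwinner p vote = ?u"
    using neq_imp_eq_other by blast
  then have "count_pref p vote ?u > p"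
    using vwinner_eq_iff[OF nt] by blast
  moreover have "count_pref p R ?u < p"
    using count_pref_other[of p R w] maj by simp
  ultimately have "count_pref p R ?u < count_pref p vote ?u"
    by linarith
  then obtain i where i: "i \<in> agents p" "vote i = ?u" "R i \<noteq> ?u"
    by (rule count_pref_lessE)
  then have "R i = w"
    using neq_imp_eq_other[of "R i" ?u] by auto
  moreover have "outcome p vote conf w < outcome p (vote(i := w)) conf w"
    using outcome_switch_to_loser_strict_mono[OF conf_eq nt u maj i(1,2)] .
  ultimately show False
    using voting_stage_eqD[OF vote_eq i(1), of w] by simp
qed

lemma SPE_outcome_majority:
  assumes maj: "count_pref p R w \<ge> p + 1" and "SPE p R vote conf"
  shows "outcome p vote conf = dlot w"
proof -
  have conf_eq: "confirmation_stage_eq p R conf" and vote_eq: "voting_stage_eq p R vote conf"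
    using assms(2) by (simp_all add: SPE_iff_stages)
  have nt: "\<not> tie p vote"
    using voting_stage_eq_not_tie[OF conf_eq vote_eq maj] .
  then have "vwinner p vote = w"
    using voting_stage_eq_vwinner[OF conf_eq vote_eq maj] by blast
  then show ?thesis
    using chance_outcome_supported_winner[OF conf_eq nt] maj nt by (simp add: outcome_def)
qed

lemma card_Maj_eq_1E:
  assumes "card (Maj p R) = 1"
  obtains w where "count_pref p R w \<ge> p + 1" "Maj p R = {w}"
  using assms that by (auto simp: Maj_def split: if_splits)

lemma Maj_eq_both_imp_tie:
  assumes "Maj p R = {OptA, OptB}"
  shows "tie p R"
proof -
  have "count_pref p R OptA \<le> p" "count_pref p R OptB \<le> p"
    using assms by (auto simp: Maj_def split: if_splits)
  then show ?thesis
    using count_pref_other[of p R OptA] by (simp add: tie_def)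
qed

theorem claim2:
  fixes p :: nat
  shows "(\<forall>R. card (Maj p R) = 1 \<longrightarrow>
            (\<forall>vote conf. SPE p R vote conf \<longrightarrow> outcome p vote conf = dlot (the_elem (Maj p R))) \<and>
            (\<exists>vote conf. SPE p R vote conf \<and> outcome p vote conf = dlot (the_elem (Maj p R)))) \<and>
         (\<forall>R. Maj p R = {OptA, OptB} \<longrightarrow>
            (\<exists>vote conf. SPE p R vote conf \<and> is_lottery (outcome p vote conf)))"
proof (intro conjI allI impI)
  fix R vote conf
  assume "card (Maj p R) = 1" and "SPE p R vote conf"
  then show "outcome p vote conf = dlot (the_elem (Maj p R))"
    by (metis card_Maj_eq_1E SPE_outcome_majority the_elem_eq)
next
  fix R
  assume "card (Maj p R) = 1"
  then obtain w where "count_pref p R w \<ge> p + 1" and "Maj p R = {w}"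
    by (rule card_Maj_eq_1E)
  then show "\<exists>vote conf. SPE p R vote conf \<and> outcome p vote conf = dlot (the_elem (Maj p R))"
    using SPE_truthful[of p R] outcome_truthful_majority[of p R w] by auto
next
  fix R
  assume "Maj p R = {OptA, OptB}"
  then have "outcome p R (truthful_conf p R) = half_lot"
    using Maj_eq_both_imp_tie by (simp add: outcome_def)
  then have "is_lottery (outcome p R (truthful_conf p R))"
    by (simp add: is_lottery_def half_lot_def)
  then show "\<exists>vote conf. SPE p R vote conf \<and> is_lottery (outcome p vote conf)"
    using SPE_truthful by blast
qed

end
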